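(* Let $(\Gamma,m)$ be a smooth closed Riemannian manifold and $\mathcal{M}\subset\mathbb{R}^{n+1}$ an orientable smooth closed hypersurface. Let $\mathcal{N}_T$ be a tubular neighbourhood of $\mathcal{M}$ of fixed width such that each $x\in\mathcal{N}_T$ has a unique decomposition $x=a(x)+d(x)Dd(x)$ with $a(x)\in\mathcal{M}$, $d$ being the signed distance function to $\mathcal{M}$, and let $G(x)=\mathrm{Id}-2d(x)D^2d(x)+2d(x)^2D^2d(x)D^2d(x)$ on $\mathcal{N}_T$. Let $f:\Gamma\to\mathcal{N}_T$ be differentiable. Then $$m(\mathrm{grad}_mf^\alpha,\mathrm{grad}_mf^\beta)\,(\nabla^G_\alpha\nabla^G_\beta d)\circ f=m(\mathrm{grad}_mf^\alpha,\mathrm{grad}_mf^\beta)\,d\circ f\,\big(D_\alpha D_\rho d\,D_\beta D_\rho d\big)\circ f.$$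
   Context: Summation over repeated Greek indices $1,\dots,n+1$ (Euclidean coordinates). $d$ is the signed distance ($\operatorname{dist}(x,\mathcal{M})$ outside the bounded region enclosed by $\mathcal{M}$, minus the distance inside), smooth on $\mathcal{N}_T$ with $|Dd|=1$. $D_\alpha$ are Euclidean partial derivatives. $\nabla^G_\alpha\nabla^G_\beta d=D_\alpha D_\beta d-\Gamma(G)^\gamma_{\alpha\beta}D_\gamma d$ is the Hessian of $d$ w.r.t. $G$, with $\Gamma(G)$ the Christoffel symbols of $G$. *)

theory Defs
  imports "HOL-Analysis.Analysis"
begin

definition pd :: "(real^'m \<Rightarrow> real) \<Rightarrow> 'm \<Rightarrow> real^'m \<Rightarrow> real" where
  "pd h i x = frechet_derivative h (at x) (axis i 1)"

definition grad :: "(real^'m \<Rightarrow> real) \<Rightarrow> real^'m \<Rightarrow> real^'m" where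
  "grad h x = (\<chi> i. pd h i x)"

definition hess :: "(real^'m \<Rightarrow> real) \<Rightarrow> real^'m \<Rightarrow> real^'m^'m" where
  "hess h x = (\<chi> a b. pd (pd h b) a x)"

fun Ck_on :: "nat \<Rightarrow> (real^'m) set \<Rightarrow> (real^'m \<Rightarrow> real) \<Rightarrow> bool" where
  "Ck_on 0 U h = continuous_on U h"
| "Ck_on (Suc k) U h = (h differentiable_on U \<and> (\<forall>i. Ck_on k U (pd h i)))"

definition smooth_on :: "(real^'m) set \<Rightarrow> (real^'m \<Rightarrow> real) \<Rightarrow> bool" where
  "smooth_on U h \<longleftrightarrow> (\<forall>k. Ck_on k U h)"

definition local_defining_fun :: "(real^'m) set \<Rightarrow> real^'m \<Rightarrow> (real^'m) set \<Rightarrow> (real^'m \<Rightarrow> real) \<Rightarrow> bool" where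
  "local_defining_fun M p U \<phi> \<longleftrightarrow> open U \<and> p \<in> U \<and> smooth_on U \<phi> \<and>
     (\<forall>x\<in>U. grad \<phi> x \<noteq> 0) \<and> M \<inter> U = {x\<in>U. \<phi> x = 0}"

definition smooth_closed_hypersurface :: "(real^'m) set \<Rightarrow> bool" where
  "smooth_closed_hypersurface M \<longleftrightarrow> M \<noteq> {} \<and> compact M \<and>
     (\<forall>p\<in>M. \<exists>U \<phi>. local_defining_fun M p U \<phi>)"

definition orientable_hypersurface :: "(real^'m) set \<Rightarrow> bool" where
  "orientable_hypersurface M \<longleftrightarrow> (\<exists>\<nu>. continuous_on M \<nu> \<and>
     (\<forall>p\<in>M. norm (\<nu> p) = 1 \<and>
        (\<forall>U \<phi>. local_defining_fun M p U \<phi> \<longrightarrow> (\<exists>c. \<nu> p = c *\<^sub>R grad \<phi> p))))"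

definition sdist :: "(real^'m) set \<Rightarrow> real^'m \<Rightarrow> real" where
  "sdist M x = (if x \<in> inside M then - infdist x M else infdist x M)"

definition Gmet :: "(real^'m \<Rightarrow> real) \<Rightarrow> real^'m \<Rightarrow> real^'m^'m" where
  "Gmet d x = mat 1 - (2 * d x) *\<^sub>R hess d x + (2 * (d x)^2) *\<^sub>R (hess d x ** hess d x)"

definition christoffel :: "(real^'m \<Rightarrow> real^'m^'m) \<Rightarrow> real^'m \<Rightarrow> 'm \<Rightarrow> 'm \<Rightarrow> 'm \<Rightarrow> real" where
  "christoffel G x c a b = (1/2) * (\<Sum>e\<in>UNIV. matrix_inv (G x) $ c $ e *
      (pd (\<lambda>y. G y $ b $ e) a x + pd (\<lambda>y. G y $ a $ e) b x - pd (\<lambda>y. G y $ a $ b) e x))"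

definition hessG :: "(real^'m \<Rightarrow> real^'m^'m) \<Rightarrow> (real^'m \<Rightarrow> real) \<Rightarrow> real^'m \<Rightarrow> 'm \<Rightarrow> 'm \<Rightarrow> real" where
  "hessG G h x a b = pd (pd h b) a x - (\<Sum>c\<in>UNIV. christoffel G x c a b * pd h c x)"

end

theory Submission
  imports Defs
begin

text \<open>Write \<open>\<nu> = Dd\<close>, \<open>H = D\<^sup>2d\<close>. Differentiating the eikonal equation \<open>|Dd| = 1\<close> gives
  \<open>H \<nu> = 0\<close> and \<open>D\<^sup>3d(\<nu>, \<cdot>, \<cdot>) = -H\<^sup>2\<close>. The first makes \<open>\<nu>\<close> a fixed covector of
  \<open>G = I - 2dH + 2d\<^sup>2H\<^sup>2\<close>, hence of \<open>G\<^sup>-\<^sup>1\<close>, so \<open>\<Gamma>\<^sup>c\<^sub>a\<^sub>b \<nu>\<^sub>c\<close> only sees the normal components of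
  \<open>DG\<close>; by the product rule and the second identity these add up to \<open>H - dH\<^sup>2\<close>. Thus
  \<open>\<nabla>\<^sup>G\<nabla>\<^sup>Gd = dH\<^sup>2\<close> pointwise on the tubular neighbourhood, which only uses that \<open>d\<close> is a smooth
  solution of the eikonal equation there; the theorem is this identity contracted with
  \<open>m(grad f\<^sup>\<alpha>, grad f\<^sup>\<beta>)\<close>.\<close>

lemma pd_eq_derivative: "(h has_derivative h') (at x) \<Longrightarrow> pd h i x = h' (axis i 1)"
  unfolding pd_def by (rule frechet_derivative_at[symmetric, THEN arg_cong[where f = "\<lambda>D. D (axis i 1)"]])

lemma pd_const: "pd (\<lambda>y. c) i x = 0"
  using pd_eq_derivative[of "\<lambda>y. c" "\<lambda>v. 0" x i] by simp

lemma pd_add: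
  "f differentiable at x \<Longrightarrow> g differentiable at x \<Longrightarrow> pd (\<lambda>y. f y + g y) i x = pd f i x + pd g i x"
  unfolding pd_def
  by (rule pd_eq_derivative[unfolded pd_def], intro has_derivative_add frechet_derivative_works[THEN iffD1])

lemma pd_diff:
  "f differentiable at x \<Longrightarrow> g differentiable at x \<Longrightarrow> pd (\<lambda>y. f y - g y) i x = pd f i x - pd g i x"
  unfolding pd_def
  by (rule pd_eq_derivative[unfolded pd_def], intro has_derivative_diff frechet_derivative_works[THEN iffD1])

lemma pd_mult:
  fixes f g :: "real^'m \<Rightarrow> real"
  assumes "f differentiable at x" "g differentiable at x"
  shows "pd (\<lambda>y. f y * g y) i x = pd f i x * g x + f x * pd g i x"
proof -
  have "((\<lambda>y. f y * g y) has_derivative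
      (\<lambda>v. f x * frechet_derivative g (at x) v + frechet_derivative f (at x) v * g x)) (at x)"
    by (intro has_derivative_mult frechet_derivative_works[THEN iffD1] assms)
  from pd_eq_derivative[OF this] show ?thesis by (simp add: pd_def)
qed

lemma pd_sum:
  assumes "finite S" "\<And>j. j \<in> S \<Longrightarrow> f j differentiable at x"
  shows "pd (\<lambda>y. \<Sum>j\<in>S. f j y) i x = (\<Sum>j\<in>S. pd (f j) i x)"
proof -
  have "((\<lambda>y. \<Sum>j\<in>S. f j y) has_derivative (\<lambda>v. \<Sum>j\<in>S. frechet_derivative (f j) (at x) v)) (at x)"
    by (intro has_derivative_sum frechet_derivative_works[THEN iffD1] assms)
  from pd_eq_derivative[OF this] show ?thesis by (simp add: pd_def)
qed

lemma pd_cong_open: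
  assumes "open N" "x \<in> N" "\<And>y. y \<in> N \<Longrightarrow> f y = g y"
  shows "pd f i x = pd g i x"
proof -
  have "(f has_derivative D) (at x) \<longleftrightarrow> (g has_derivative D) (at x)" for D
    using has_derivative_transform_within_open assms by (metis (no_types, lifting))
  then show ?thesis unfolding pd_def frechet_derivative_def by simp
qed

lemma pd_locally_const:
  assumes "open N" "x \<in> N" "\<And>y. y \<in> N \<Longrightarrow> f y = c"
  shows "pd f i x = 0"
  using pd_cong_open[OF assms(1,2), of f "\<lambda>y. c"] assms(3) pd_const by simp

lemma pd_sum_mult:
  fixes f g :: "'a::finite \<Rightarrow> real^'m \<Rightarrow> real"
  assumes "\<And>j. f j differentiable at x" "\<And>j. g j differentiable at x"
  shows "pd (\<lambda>y. \<Sum>j\<in>UNIV. f j y * g j y) i x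
       = (\<Sum>j\<in>UNIV. pd (f j) i x * g j x + f j x * pd (g j) i x)"
  using assms by (simp add: pd_sum pd_mult)

lemma smooth_on_pd: "smooth_on N h \<Longrightarrow> smooth_on N (pd h i)"
  unfolding smooth_on_def by (metis Ck_on.simps(2))

lemma smooth_on_imp_differentiable_at:
  "open N \<Longrightarrow> smooth_on N h \<Longrightarrow> y \<in> N \<Longrightarrow> h differentiable at y"
  unfolding smooth_on_def by (metis Ck_on.simps(2) differentiable_on_eq_differentiable_at)

lemma smooth_on_imp_isCont: "open N \<Longrightarrow> smooth_on N h \<Longrightarrow> y \<in> N \<Longrightarrow> isCont h y"
  unfolding smooth_on_def by (metis Ck_on.simps(1) continuous_on_eq_continuous_at)

lemma has_real_derivative_pd_line:
  fixes h :: "real^'m \<Rightarrow> real"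
  assumes "h differentiable at (p + s *\<^sub>R axis i 1)"
  shows "((\<lambda>s. h (p + s *\<^sub>R axis i 1)) has_real_derivative pd h i (p + s *\<^sub>R axis i 1)) (at s)"
proof -
  let ?D = "frechet_derivative h (at (p + s *\<^sub>R axis i 1))"
  have "((\<lambda>s. p + s *\<^sub>R axis i 1) has_derivative (\<lambda>r. r *\<^sub>R axis i 1)) (at s)"
    by (auto intro!: derivative_eq_intros)
  from diff_chain_at[OF this frechet_derivative_works[THEN iffD1, OF assms]]
  have "((\<lambda>s. h (p + s *\<^sub>R axis i 1)) has_derivative (\<lambda>r. ?D (r *\<^sub>R axis i 1))) (at s)"
    by (simp add: o_def)
  moreover have "linear ?D"
    using assms frechet_derivative_works has_derivative_linear by blast
  ultimately show ?thesis
    unfolding has_field_derivative_def pd_def by (simp add: linear_scale mult.commute[of _ "?D (axis i 1)"])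
qed

lemma second_difference_mean_value:
  fixes h :: "real^'m \<Rightarrow> real"
  assumes N: "open N" "smooth_on N h" and t: "t > 0"
    and square: "\<And>s \<sigma>. s \<in> {0..t} \<Longrightarrow> \<sigma> \<in> {0..t} \<Longrightarrow> x + s *\<^sub>R axis i 1 + \<sigma> *\<^sub>R axis j 1 \<in> N"
  obtains s \<sigma> where "s \<in> {0..t}" "\<sigma> \<in> {0..t}"
    "h (x + t *\<^sub>R axis i 1 + t *\<^sub>R axis j 1) - h (x + t *\<^sub>R axis i 1) - h (x + t *\<^sub>R axis j 1) + h x
       = t * t * pd (pd h i) j (x + s *\<^sub>R axis i 1 + \<sigma> *\<^sub>R axis j 1)"
proof -
  define v :: "real^'m" where "v = axis j 1"
  have diff: "h differentiable at y" "pd h i differentiable at y" if "y \<in> N" for y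
    using that smooth_on_imp_differentiable_at[OF N(1)] smooth_on_pd N(2) by blast+
  have shift: "x + s *\<^sub>R axis i 1 + t *\<^sub>R v = (x + t *\<^sub>R v) + s *\<^sub>R axis i 1" for s
    by (simp add: algebra_simps)
  have "((\<lambda>s. h (x + s *\<^sub>R axis i 1 + t *\<^sub>R v) - h (x + s *\<^sub>R axis i 1)) has_real_derivative
        pd h i (x + s *\<^sub>R axis i 1 + t *\<^sub>R v) - pd h i (x + s *\<^sub>R axis i 1)) (at s)" if "0 \<le> s" "s \<le> t" for s
  proof -
    have "(x + t *\<^sub>R v) + s *\<^sub>R axis i 1 \<in> N" "x + s *\<^sub>R axis i 1 \<in> N"
      using square[of s t] square[of s 0] that t by (auto simp: v_def algebra_simps)
    from this[THEN diff(1), THEN has_real_derivative_pd_line]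
    have "((\<lambda>s. h ((x + t *\<^sub>R v) + s *\<^sub>R axis i 1)) has_real_derivative
        pd h i ((x + t *\<^sub>R v) + s *\<^sub>R axis i 1)) (at s)"
      "((\<lambda>s. h (x + s *\<^sub>R axis i 1)) has_real_derivative pd h i (x + s *\<^sub>R axis i 1)) (at s)" .
    from DERIV_diff[OF this] show ?thesis unfolding shift .
  qed
  from MVT2[OF t this] obtain s where s: "0 < s" "s < t"
    "h (x + t *\<^sub>R axis i 1 + t *\<^sub>R v) - h (x + t *\<^sub>R axis i 1) - (h (x + t *\<^sub>R v) - h x)
      = t * (pd h i (x + s *\<^sub>R axis i 1 + t *\<^sub>R v) - pd h i (x + s *\<^sub>R axis i 1))"
    by auto
  have "((\<lambda>\<sigma>. pd h i ((x + s *\<^sub>R axis i 1) + \<sigma> *\<^sub>R v)) has_real_derivative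
        pd (pd h i) j (x + s *\<^sub>R axis i 1 + \<sigma> *\<^sub>R v)) (at \<sigma>)" if "0 \<le> \<sigma>" "\<sigma> \<le> t" for \<sigma>
    unfolding v_def
    by (intro has_real_derivative_pd_line diff) (use square that s in \<open>auto\<close>)
  from MVT2[OF t this] obtain \<sigma> where \<sigma>: "0 < \<sigma>" "\<sigma> < t"
    "pd h i (x + s *\<^sub>R axis i 1 + t *\<^sub>R v) - pd h i (x + s *\<^sub>R axis i 1)
      = t * pd (pd h i) j (x + s *\<^sub>R axis i 1 + \<sigma> *\<^sub>R v)"
    by auto
  show ?thesis
    by (rule that[of s \<sigma>]) (use s \<sigma> in \<open>auto simp: v_def algebra_simps\<close>)
qed

lemma isCont_eq_if_values_meet_nearby:
  fixes f g :: "'a::metric_space \<Rightarrow> 'b::metric_space"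
  assumes f: "isCont f x" and g: "isCont g x"
    and meet: "\<And>\<delta>. \<delta> > 0 \<Longrightarrow> \<exists>p q. dist p x < \<delta> \<and> dist q x < \<delta> \<and> f p = g q"
  shows "f x = g x"
proof (rule ccontr)
  assume "f x \<noteq> g x"
  then have e: "dist (f x) (g x) / 2 > 0" by simp
  obtain \<delta>f where \<delta>f: "\<delta>f > 0" "\<And>p. dist p x < \<delta>f \<Longrightarrow> dist (f p) (f x) < dist (f x) (g x) / 2"
    using f e unfolding continuous_at_eps_delta by blast
  obtain \<delta>g where \<delta>g: "\<delta>g > 0" "\<And>q. dist q x < \<delta>g \<Longrightarrow> dist (g q) (g x) < dist (f x) (g x) / 2"
    using g e unfolding continuous_at_eps_delta by blast
  obtain p q where pq: "dist p x < min \<delta>f \<delta>g" "dist q x < min \<delta>f \<delta>g" "f p = g q"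
    using meet[of "min \<delta>f \<delta>g"] \<delta>f \<delta>g by auto
  have "dist (f x) (g x) \<le> dist (f p) (f x) + dist (g q) (g x)"
    using dist_triangle3[of "f x" "g x" "f p"] pq(3) by (simp add: dist_commute)
  also have "\<dots> < dist (f x) (g x)"
    using \<delta>f(2)[of p] \<delta>g(2)[of q] pq by simp
  finally show False by simp
qed

theorem pd_pd_commute:
  fixes h :: "real^'m \<Rightarrow> real"
  assumes N: "open N" "smooth_on N h" and x: "x \<in> N"
  shows "pd (pd h i) j x = pd (pd h j) i x"
proof (rule isCont_eq_if_values_meet_nearby[where f = "pd (pd h i) j" and g = "pd (pd h j) i"])
  show "isCont (pd (pd h i) j) x" "isCont (pd (pd h j) i) x"
    using smooth_on_imp_isCont[OF N(1) _ x] smooth_on_pd N(2) by blast+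
  fix \<delta> :: real assume "\<delta> > 0"
  obtain r where r: "r > 0" "ball x r \<subseteq> N" using N x open_contains_ball by blast
  define t where "t = min r \<delta> / 3"
  have t: "t > 0" using r \<open>\<delta> > 0\<close> by (simp add: t_def)
  have near: "dist (x + s *\<^sub>R axis a 1 + \<sigma> *\<^sub>R axis b 1) x < min r \<delta>"
    if "s \<in> {0..t}" "\<sigma> \<in> {0..t}" for s \<sigma> and a b :: 'm
  proof -
    have "dist (x + s *\<^sub>R axis a 1 + \<sigma> *\<^sub>R axis b 1) x = norm (s *\<^sub>R axis a (1::real) + \<sigma> *\<^sub>R axis b 1)"
      by (simp add: dist_norm)
    also have "\<dots> \<le> norm (s *\<^sub>R axis a (1::real)) + norm (\<sigma> *\<^sub>R axis b (1::real))"
      by (rule norm_triangle_ineq)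
    also have "\<dots> = s + \<sigma>" using that by simp
    also have "\<dots> < min r \<delta>" using that t by (simp add: t_def)
    finally show ?thesis .
  qed
  then have square: "x + s *\<^sub>R axis a 1 + \<sigma> *\<^sub>R axis b 1 \<in> N"
    if "s \<in> {0..t}" "\<sigma> \<in> {0..t}" for s \<sigma> and a b :: 'm
    using r(2) that by (force simp: dist_commute)
  obtain s \<sigma> where s\<sigma>: "s \<in> {0..t}" "\<sigma> \<in> {0..t}"
    "h (x + t *\<^sub>R axis i 1 + t *\<^sub>R axis j 1) - h (x + t *\<^sub>R axis i 1) - h (x + t *\<^sub>R axis j 1) + h x
       = t * t * pd (pd h i) j (x + s *\<^sub>R axis i 1 + \<sigma> *\<^sub>R axis j 1)"
    using second_difference_mean_value[OF N t square] by blast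
  obtain s' \<sigma>' where s\<sigma>': "s' \<in> {0..t}" "\<sigma>' \<in> {0..t}"
    "h (x + t *\<^sub>R axis j 1 + t *\<^sub>R axis i 1) - h (x + t *\<^sub>R axis j 1) - h (x + t *\<^sub>R axis i 1) + h x
       = t * t * pd (pd h j) i (x + s' *\<^sub>R axis j 1 + \<sigma>' *\<^sub>R axis i 1)"
    using second_difference_mean_value[OF N t square] by blast
  have swap: "x + t *\<^sub>R axis j 1 + t *\<^sub>R axis i 1 = x + t *\<^sub>R axis i 1 + t *\<^sub>R axis j 1"
    by (simp add: add_ac)
  have "t * t * pd (pd h i) j (x + s *\<^sub>R axis i 1 + \<sigma> *\<^sub>R axis j 1)
      = t * t * pd (pd h j) i (x + s' *\<^sub>R axis j 1 + \<sigma>' *\<^sub>R axis i 1)"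
    using s\<sigma>(3) s\<sigma>'(3)[unfolded swap] by linarith
  then have "pd (pd h i) j (x + s *\<^sub>R axis i 1 + \<sigma> *\<^sub>R axis j 1)
      = pd (pd h j) i (x + s' *\<^sub>R axis j 1 + \<sigma>' *\<^sub>R axis i 1)"
    using t by simp
  then show "\<exists>p q. dist p x < \<delta> \<and> dist q x < \<delta> \<and> pd (pd h i) j p = pd (pd h j) i q"
    using near[OF s\<sigma>(1,2)] near[OF s\<sigma>'(1,2)] by force
qed

lemma Gmet_matrix_mult_vector:
  fixes H :: "real^'n^'n"
  shows "(mat 1 - (2*c) *\<^sub>R H + (2*c^2) *\<^sub>R (H ** H)) *v v
       = v - (2*c) *\<^sub>R (H *v v) + (2*c^2) *\<^sub>R (H *v (H *v v))"
  by (simp add: algebra_simps scaleR_matrix_vector_assoc[symmetric] matrix_vector_mul_assoc[symmetric])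

text \<open>For symmetric \<open>H\<close>, \<open>v \<bullet> G v = |v - cHv|\<^sup>2 + c\<^sup>2|Hv|\<^sup>2\<close>, so \<open>G\<close> has trivial kernel.\<close>
lemma invertible_Gmet_matrix:
  fixes H :: "real^'n^'n"
  assumes sym: "transpose H = H"
  shows "invertible (mat 1 - (2*c) *\<^sub>R H + (2*c^2) *\<^sub>R (H ** H))" (is "invertible ?G")
proof -
  have "v = 0" if Gv: "?G *v v = 0" for v :: "real^'n"
  proof -
    define w where "w = H *v v"
    have self_adjoint: "u \<bullet> (H *v z) = (H *v u) \<bullet> z" for u z :: "real^'n"
      by (metis dot_lmul_matrix sym transpose_matrix_vector)
    have "0 = v \<bullet> (?G *v v)" using Gv by simp
    also have "\<dots> = v \<bullet> v - 2*c * (v \<bullet> w) + 2*c^2 * (w \<bullet> w)"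
      unfolding Gmet_matrix_mult_vector w_def[symmetric]
      by (simp add: inner_diff_right inner_add_right self_adjoint w_def)
    also have "\<dots> = (v - c *\<^sub>R w) \<bullet> (v - c *\<^sub>R w) + c^2 * (w \<bullet> w)"
      by (simp add: inner_diff_left inner_diff_right inner_commute power2_eq_square algebra_simps)
    finally have "(v - c *\<^sub>R w) \<bullet> (v - c *\<^sub>R w) + c^2 * (w \<bullet> w) = 0" by simp
    then have "v - c *\<^sub>R w = 0" "c *\<^sub>R w = 0"
      by (simp_all add: add_nonneg_eq_0_iff power2_eq_square)
    then show "v = 0" by simp
  qed
  then obtain B where "B ** ?G = mat 1" using matrix_left_invertible_ker by blast
  then show ?thesis using invertible_left_inverse by blast
qed

lemma Gmet_matrix_inv_fixes_kernel:
  fixes H :: "real^'n^'n"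
  assumes sym: "transpose H = H" and Hv: "H *v v = 0"
  shows "v v* matrix_inv (mat 1 - (2*c) *\<^sub>R H + (2*c^2) *\<^sub>R (H ** H)) = v"
proof -
  let ?G = "mat 1 - (2*c) *\<^sub>R H + (2*c^2) *\<^sub>R (H ** H)"
  have "?G ** matrix_inv ?G = mat 1"
    using invertible_Gmet_matrix[OF sym] unfolding matrix_inv_def invertible_def
    by (metis (mono_tags, lifting) someI_ex)
  moreover have "v v* ?G = v"
  proof -
    have "H $ i $ j = H $ j $ i" for i j
      using sym by (metis transpose_def vec_lambda_beta)
    then have "transpose ?G = ?G"
      by (simp add: vec_eq_iff transpose_def matrix_matrix_mult_def mat_def mult.commute)
    then have "v v* ?G = ?G *v v" by (metis transpose_matrix_vector)
    also have "\<dots> = v" by (simp add: Gmet_matrix_mult_vector Hv)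
    finally show ?thesis .
  qed
  ultimately show ?thesis by (metis vector_matrix_mul_assoc vector_matrix_mul_rid)
qed

lemma christoffel_contract_fixed_covector:
  assumes fixed: "w v* matrix_inv (G x) = w"
  shows "(\<Sum>c\<in>UNIV. christoffel G x c a b * w $ c)
       = 1/2 * (\<Sum>e\<in>UNIV. w $ e * (pd (\<lambda>y. G y $ b $ e) a x + pd (\<lambda>y. G y $ a $ e) b x
                                     - pd (\<lambda>y. G y $ a $ b) e x))"
proof -
  define P where "P e = pd (\<lambda>y. G y $ b $ e) a x + pd (\<lambda>y. G y $ a $ e) b x - pd (\<lambda>y. G y $ a $ b) e x" for e
  have "(\<Sum>c\<in>UNIV. christoffel G x c a b * w $ c)
      = (\<Sum>c\<in>UNIV. \<Sum>e\<in>UNIV. 1/2 * (matrix_inv (G x) $ c $ e * w $ c) * P e)"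
    by (simp add: christoffel_def P_def sum_distrib_left sum_distrib_right mult_ac)
  also have "\<dots> = 1/2 * (\<Sum>e\<in>UNIV. (\<Sum>c\<in>UNIV. matrix_inv (G x) $ c $ e * w $ c) * P e)"
    by (subst sum.swap) (simp add: sum_distrib_left sum_distrib_right mult_ac)
  also have "\<dots> = 1/2 * (\<Sum>e\<in>UNIV. w $ e * P e)"
    using fixed by (simp add: vec_eq_iff vector_matrix_mult_def mult.commute)
  finally show ?thesis unfolding P_def .
qed

lemma sum_mult_sum_swap:
  fixes w :: "'a \<Rightarrow> 'c::comm_semiring_1"
  shows "(\<Sum>e\<in>A. w e * (\<Sum>k\<in>B. f k * g k e)) = (\<Sum>k\<in>B. f k * (\<Sum>e\<in>A. g k e * w e))"
  by (simp add: sum_distrib_left mult_ac sum.swap[of _ A B])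

lemma sum_sum_mult_swap:
  fixes w :: "'a \<Rightarrow> 'c::comm_semiring_1"
  shows "(\<Sum>e\<in>A. w e * (\<Sum>k\<in>B. g e k * f k)) = (\<Sum>k\<in>B. (\<Sum>e\<in>A. w e * g e k) * f k)"
  by (simp add: sum_distrib_left sum_distrib_right mult_ac sum.swap[of _ A B])

text \<open>\<open>\<partial>\<^sub>a G\<^sub>b\<^sub>e\<close> by the product rule applied to \<open>G = I - 2cH + 2c\<^sup>2H\<^sup>2\<close>, where \<open>c, \<nu>, H, T\<close>
  stand for \<open>d, Dd, D\<^sup>2d, D\<^sup>3d\<close> at a point (see \<open>pd_Gmet\<close>).\<close>
definition dGmet :: "real \<Rightarrow> ('n::finite \<Rightarrow> real) \<Rightarrow> ('n \<Rightarrow> 'n \<Rightarrow> real) \<Rightarrow> ('n \<Rightarrow> 'n \<Rightarrow> 'n \<Rightarrow> real)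
    \<Rightarrow> 'n \<Rightarrow> 'n \<Rightarrow> 'n \<Rightarrow> real" where
  "dGmet c \<nu> H T a b e = - 2 * (\<nu> a * H b e + c * T a b e) + 4 * c * \<nu> a * (\<Sum>k\<in>UNIV. H b k * H k e)
     + 2 * c^2 * (\<Sum>k\<in>UNIV. T a b k * H k e + H b k * T a k e)"

text \<open>The assumptions are what \<open>|Dd| = 1\<close> and the symmetry of mixed partials give for
  \<open>\<nu> = Dd\<close>, \<open>H\<^sub>p\<^sub>q = D\<^sub>pD\<^sub>qd\<close>, \<open>T c p q = D\<^sub>c H\<^sub>p\<^sub>q\<close> at a point.\<close>
locale eikonal_jet =
  fixes \<nu> :: "'n::finite \<Rightarrow> real" and H :: "'n \<Rightarrow> 'n \<Rightarrow> real" and T :: "'n \<Rightarrow> 'n \<Rightarrow> 'n \<Rightarrow> real"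
  assumes H_sym: "H p q = H q p"
    and unit: "(\<Sum>e\<in>UNIV. \<nu> e * \<nu> e) = 1"
    and H_normal: "(\<Sum>e\<in>UNIV. H p e * \<nu> e) = 0"
    and T_normal: "(\<Sum>e\<in>UNIV. T a p e * \<nu> e) = - (\<Sum>e\<in>UNIV. H p e * H a e)"
    and T_sym: "T e a b = T b a e"
begin

definition Hsq :: "'n \<Rightarrow> 'n \<Rightarrow> real" where
  "Hsq p q = (\<Sum>k\<in>UNIV. H p k * H q k)"

lemma Hsq_sym: "Hsq p q = Hsq q p"
  unfolding Hsq_def by (simp add: mult.commute)

lemma Hsq_matrix_product: "(\<Sum>k\<in>UNIV. H p k * H k q) = Hsq p q"
  unfolding Hsq_def by (simp add: H_sym[of _ q])

lemma contract_normal_H: "(\<Sum>e\<in>UNIV. \<nu> e * (\<Sum>k\<in>UNIV. X k * H k e)) = 0"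
  by (simp add: sum_mult_sum_swap H_normal)

lemma contract_normal_T: "(\<Sum>e\<in>UNIV. \<nu> e * T a p e) = - Hsq p a"
  using T_normal by (simp add: Hsq_def mult.commute)

lemma contract_normal_T_first: "(\<Sum>e\<in>UNIV. \<nu> e * T e p q) = - Hsq p q"
  using contract_normal_T[of q p] by (simp add: T_sym[of _ p q] Hsq_sym)

lemma H_Hsq_comm: "(\<Sum>k\<in>UNIV. H b k * Hsq k a) = (\<Sum>k\<in>UNIV. Hsq a k * H k b)"
  by (rule sum.cong) (simp_all add: H_sym[of b] Hsq_sym[of _ a] mult.commute)

lemma contract_normal_dGmet_last:
  "(\<Sum>e\<in>UNIV. \<nu> e * dGmet c \<nu> H T a b e) = 2*c * Hsq b a - 2*c^2 * (\<Sum>k\<in>UNIV. H b k * Hsq k a)"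
proof -
  have "(\<Sum>e\<in>UNIV. \<nu> e * dGmet c \<nu> H T a b e)
      = - 2 * \<nu> a * (\<Sum>e\<in>UNIV. \<nu> e * H b e) - 2*c * (\<Sum>e\<in>UNIV. \<nu> e * T a b e)
        + 4*c * \<nu> a * (\<Sum>e\<in>UNIV. \<nu> e * (\<Sum>k\<in>UNIV. H b k * H k e))
        + 2*c^2 * ((\<Sum>e\<in>UNIV. \<nu> e * (\<Sum>k\<in>UNIV. T a b k * H k e))
                 + (\<Sum>e\<in>UNIV. \<nu> e * (\<Sum>k\<in>UNIV. H b k * T a k e)))"
    by (simp add: dGmet_def algebra_simps sum.distrib sum_distrib_left sum_subtractf sum_negf)
  also have "\<dots> = 2*c * Hsq b a - 2*c^2 * (\<Sum>k\<in>UNIV. H b k * Hsq k a)"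
  proof -
    have "(\<Sum>e\<in>UNIV. \<nu> e * H b e) = 0"
      using H_normal by (simp add: mult.commute)
    moreover have "(\<Sum>e\<in>UNIV. \<nu> e * (\<Sum>k\<in>UNIV. H b k * T a k e)) = - (\<Sum>k\<in>UNIV. H b k * Hsq k a)"
      using contract_normal_T by (simp add: sum_mult_sum_swap mult.commute[of _ "\<nu> _"] sum_negf)
    ultimately show ?thesis by (simp add: contract_normal_H contract_normal_T)
  qed
  finally show ?thesis .
qed

lemma contract_normal_dGmet_first:
  "(\<Sum>e\<in>UNIV. \<nu> e * dGmet c \<nu> H T e a b)
     = - 2 * H a b + 6*c * Hsq a b - 2*c^2 * (\<Sum>k\<in>UNIV. Hsq a k * H k b + H a k * Hsq k b)"
proof -
  have "(\<Sum>e\<in>UNIV. \<nu> e * dGmet c \<nu> H T e a b)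
      = - 2 * (\<Sum>e\<in>UNIV. \<nu> e * \<nu> e) * H a b - 2*c * (\<Sum>e\<in>UNIV. \<nu> e * T e a b)
        + 4*c * (\<Sum>e\<in>UNIV. \<nu> e * \<nu> e) * (\<Sum>k\<in>UNIV. H a k * H k b)
        + 2*c^2 * ((\<Sum>e\<in>UNIV. \<nu> e * (\<Sum>k\<in>UNIV. T e a k * H k b))
                 + (\<Sum>e\<in>UNIV. \<nu> e * (\<Sum>k\<in>UNIV. H a k * T e k b)))"
    by (simp add: dGmet_def algebra_simps sum.distrib sum_distrib_left sum_distrib_right sum_subtractf sum_negf)
  also have "\<dots> = - 2 * H a b + 6*c * Hsq a b - 2*c^2 * (\<Sum>k\<in>UNIV. Hsq a k * H k b + H a k * Hsq k b)"
  proof -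
    have "(\<Sum>e\<in>UNIV. \<nu> e * (\<Sum>k\<in>UNIV. T e a k * H k b)) = - (\<Sum>k\<in>UNIV. Hsq a k * H k b)"
      by (simp add: sum_sum_mult_swap contract_normal_T_first sum_negf)
    moreover have "(\<Sum>e\<in>UNIV. \<nu> e * (\<Sum>k\<in>UNIV. H a k * T e k b)) = - (\<Sum>k\<in>UNIV. H a k * Hsq k b)"
      using contract_normal_T_first by (simp add: sum_mult_sum_swap mult.commute[of _ "\<nu> _"] sum_negf)
    ultimately show ?thesis
      unfolding unit contract_normal_T_first Hsq_matrix_product by (simp add: sum.distrib algebra_simps)
  qed
  finally show ?thesis .
qed

theorem hessG_contraction:
  "H a b - 1/2 * (\<Sum>e\<in>UNIV. \<nu> e * (dGmet c \<nu> H T a b e + dGmet c \<nu> H T b a e - dGmet c \<nu> H T e a b))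
     = c * Hsq a b"
  by (simp add: sum.distrib sum_subtractf algebra_simps contract_normal_dGmet_last contract_normal_dGmet_first
      H_Hsq_comm Hsq_sym[of b a])

end

context
  fixes d :: "real^'n \<Rightarrow> real" and N :: "(real^'n) set"
  assumes N: "open N" "smooth_on N d"
    and eikonal: "\<forall>x\<in>N. norm (grad d x) = 1"
begin

lemma differentiable_pd:
  "y \<in> N \<Longrightarrow> d differentiable at y" "y \<in> N \<Longrightarrow> pd d i differentiable at y"
  "y \<in> N \<Longrightarrow> pd (pd d i) j differentiable at y"
  using smooth_on_imp_differentiable_at[OF N(1)] smooth_on_pd N(2) by blast+

lemma eikonal_sum_sq: "x \<in> N \<Longrightarrow> (\<Sum>e\<in>UNIV. pd d e x * pd d e x) = 1"
  using eikonal by (simp add: norm_eq_1 inner_vec_def grad_def)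

lemma eikonal_hess_normal:
  assumes x: "x \<in> N"
  shows "(\<Sum>e\<in>UNIV. pd (pd d e) p x * pd d e x) = 0"
proof -
  have "pd (\<lambda>y. \<Sum>e\<in>UNIV. pd d e y * pd d e y) p x = 0"
    by (rule pd_locally_const[OF N(1) x eikonal_sum_sq])
  then have "(\<Sum>e\<in>UNIV. 2 * (pd (pd d e) p x * pd d e x)) = 0"
    using x by (simp add: pd_sum_mult differentiable_pd mult.commute)
  then show ?thesis by (simp add: sum_distrib_left[symmetric])
qed

lemma eikonal_third_normal:
  assumes x: "x \<in> N"
  shows "(\<Sum>e\<in>UNIV. pd (pd (pd d e) p) a x * pd d e x) = - (\<Sum>e\<in>UNIV. pd (pd d e) p x * pd (pd d e) a x)"
proof -
  have "pd (\<lambda>y. \<Sum>e\<in>UNIV. pd (pd d e) p y * pd d e y) a x = 0"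
    by (rule pd_locally_const[OF N(1) x eikonal_hess_normal])
  then show ?thesis
    using x by (simp add: pd_sum_mult differentiable_pd sum.distrib eq_neg_iff_add_eq_0)
qed

lemma hess_sym: "x \<in> N \<Longrightarrow> pd (pd d q) p x = pd (pd d p) q x"
  by (rule pd_pd_commute[OF N])

lemma third_pd_sym:
  assumes x: "x \<in> N"
  shows "pd (pd (pd d b) a) e x = pd (pd (pd d e) a) b x"
proof -
  have "pd (pd (pd d b) a) e x = pd (pd (pd d a) b) e x"
    by (rule pd_cong_open[OF N(1) x]) (simp add: hess_sym)
  also have "\<dots> = pd (pd (pd d a) e) b x"
    by (rule pd_pd_commute[OF N(1) smooth_on_pd[OF N(2)] x])
  also have "\<dots> = pd (pd (pd d e) a) b x"
    by (rule pd_cong_open[OF N(1) x]) (simp add: hess_sym)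
  finally show ?thesis .
qed

lemma pd_Gmet:
  assumes x: "x \<in> N"
  shows "pd (\<lambda>y. Gmet d y $ b $ e) a x
    = dGmet (d x) (\<lambda>e. pd d e x) (\<lambda>p q. pd (pd d q) p x) (\<lambda>c p q. pd (pd (pd d q) p) c x) a b e"
proof -
  have entry: "(\<lambda>y. Gmet d y $ b $ e) = (\<lambda>y. (if b = e then 1 else 0) - 2 * d y * pd (pd d e) b y
      + 2 * (d y * d y) * (\<Sum>k\<in>UNIV. pd (pd d k) b y * pd (pd d e) k y))"
    by (simp add: fun_eq_iff Gmet_def hess_def matrix_matrix_mult_def mat_def power2_eq_square)
  show ?thesis
    unfolding entry using x by (simp add: pd_add pd_diff pd_mult pd_const pd_sum differentiable_pd dGmet_def
        algebra_simps power2_eq_square)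
qed

theorem hessG_Gmet_eikonal:
  assumes x: "x \<in> N"
  shows "hessG (Gmet d) d x a b = d x * (\<Sum>r\<in>UNIV. pd (pd d r) a x * pd (pd d r) b x)"
proof -
  define \<nu> where "\<nu> = (\<lambda>e. pd d e x)"
  define H where "H = (\<lambda>p q. pd (pd d q) p x)"
  define T where "T = (\<lambda>c p q. pd (pd (pd d q) p) c x)"
  interpret eikonal_jet \<nu> H T
  proof
    show "H p q = H q p" for p q
      using hess_sym[OF x] by (simp add: H_def)
    show "(\<Sum>e\<in>UNIV. \<nu> e * \<nu> e) = 1"
      using eikonal_sum_sq[OF x] by (simp add: \<nu>_def)
    show "(\<Sum>e\<in>UNIV. H p e * \<nu> e) = 0" for p
      using eikonal_hess_normal[OF x] by (simp add: H_def \<nu>_def)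
    show "(\<Sum>e\<in>UNIV. T a p e * \<nu> e) = - (\<Sum>e\<in>UNIV. H p e * H a e)" for a p
      using eikonal_third_normal[OF x] by (simp add: T_def H_def \<nu>_def)
    show "T e a b = T b a e" for e a b
      using third_pd_sym[OF x] by (simp add: T_def)
  qed
  have "transpose (hess d x) = hess d x" "hess d x *v grad d x = 0"
    using H_sym H_normal by (simp_all add: vec_eq_iff transpose_def hess_def grad_def H_def \<nu>_def
        matrix_vector_mult_def)
  then have "grad d x v* matrix_inv (Gmet d x) = grad d x"
    unfolding Gmet_def by (rule Gmet_matrix_inv_fixes_kernel)
  from christoffel_contract_fixed_covector[where G = "Gmet d", OF this]
  have "hessG (Gmet d) d x a b
      = H a b - 1/2 * (\<Sum>e\<in>UNIV. \<nu> e * (dGmet (d x) \<nu> H T a b e + dGmet (d x) \<nu> H T b a e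
                                           - dGmet (d x) \<nu> H T e a b))"
    using x by (simp add: hessG_def grad_def pd_Gmet \<nu>_def H_def T_def)
  also have "\<dots> = d x * Hsq a b"
    by (rule hessG_contraction)
  finally show ?thesis unfolding Hsq_def by (simp add: H_def)
qed

end

theorem mainTheorem8:
  fixes M :: "(real^'n) set" and T :: real
    and U :: "(real^'k) set" and g :: "real^'k \<Rightarrow> real^'k^'k"
    and f :: "real^'k \<Rightarrow> real^'n"
  defines "d \<equiv> sdist M"
  defines "N \<equiv> {x. \<bar>sdist M x\<bar> < T}"
  assumes dim: "CARD('n) \<ge> 2"
    and hyp: "smooth_closed_hypersurface M" and orient: "orientable_hypersurface M"
    and T: "T > 0" and N_open: "open N"
    and d_smooth: "smooth_on N d"
    and d_eik: "\<forall>x\<in>N. norm (grad d x) = 1"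
    and decomp: "\<forall>x\<in>N. \<exists>!a. a \<in> M \<and> x = a + d x *\<^sub>R grad d x"
    and U_open: "open U"
    and g_smooth: "\<forall>i j. smooth_on U (\<lambda>y. g y $ i $ j)"
    and g_sym: "\<forall>y\<in>U. transpose (g y) = g y"
    and g_pos: "\<forall>y\<in>U. \<forall>v. v \<noteq> 0 \<longrightarrow> v \<bullet> (g y *v v) > 0"
    and f_diff: "f differentiable_on U"
    and f_N: "f ` U \<subseteq> N"
  shows "\<forall>y\<in>U.
    (\<Sum>a\<in>UNIV. \<Sum>b\<in>UNIV.
        (\<Sum>i\<in>UNIV. \<Sum>j\<in>UNIV. matrix_inv (g y) $ i $ j * pd (\<lambda>z. f z $ a) i y * pd (\<lambda>z. f z $ b) j y)
        * hessG (Gmet d) d (f y) a b)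
  = (\<Sum>a\<in>UNIV. \<Sum>b\<in>UNIV.
        (\<Sum>i\<in>UNIV. \<Sum>j\<in>UNIV. matrix_inv (g y) $ i $ j * pd (\<lambda>z. f z $ a) i y * pd (\<lambda>z. f z $ b) j y)
        * (d (f y) * (\<Sum>r\<in>UNIV. pd (pd d r) a (f y) * pd (pd d r) b (f y))))"
  using f_N by (auto simp: image_subset_iff hessG_Gmet_eikonal[OF N_open d_smooth d_eik])

end
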